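(* Let $\mathscr D:\mathscr N=\mathscr N_1\cup\cdots\cup\mathscr N_k$ be a decomposition of a chemical reaction network $\mathscr N$, let $\mathscr C_{\mathscr D}$ be its set of common complexes and $d=|\mathscr C_{\mathscr D}|$. For each $i$ let $\ell_i$ be the number of linkage classes of $\mathscr N_i$ and $h_i=|\mathscr C_i\cap\mathscr C_{\mathscr D}|$, and let $\ell$ be the number of linkage classes of $\mathscr N$. Then $\mathscr D$ is incidence independent if and only if $$\sum_{i=1}^k \ell_i-\ell=\sum_{i=1}^k h_i-d.$$
   Context: A chemical reaction network (CRN) $\mathscr N=(\mathscr S,\mathscr C,\mathscr R)$ consists of a finite set of species $\mathscr S$, a finite set of complexes $\mathscr C$ (nonnegative integer combinations of species), and a set of reactions $\mathscr R\subseteq\mathscr C\times\mathscr C$ with no reaction $(y,y)$ and every complex occurring in some reaction; it is viewed as a directed graph on $\mathscr C$. Linkage classes are the connected components of the underlying undirected graph. A decomposition $\mathscr N=\mathscr N_1\cup\cdots\cup\mathscr N_k$ is given by a partition $\{\mathscr R_1,\dots,\mathscr R_k\}$ of $\mathscr R$ (with $k\ge 2$); the subnetwork $\mathscr N_i=(\mathscr S_i,\mathscr C_i,\mathscr R_i)$ has as complex set $\mathscr C_i$ the complexes occurring in reactions of $\mathscr R_i$ and as species the species occurring in $\mathscr C_i$. The incidence map $I_a:\mathbb R^{\mathscr R}\to\mathbb R^{\mathscr C}$ sends the basis vector of a reaction $y\to y'$ to $\omega_{y'}-\omega_y$; similarly for each subnetwork (with images viewed inside $\mathbb R^{\mathscr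 C}$). The decomposition is incidence independent if $\operatorname{Im} I_a$ is the direct sum of the images of the incidence maps of the $\mathscr N_i$; since $\dim\operatorname{Im}I_a=n-\ell$ ($n$ = number of complexes), this is equivalent to $n-\ell=\sum_i(n_i-\ell_i)$. The set $\mathscr C_{\mathscr D}$ of common complexes consists of all complexes belonging to the complex sets of at least two distinct subnetworks. *)

theory Defs
  imports Complex_Main
begin

type_synonym 's complex = "'s \<Rightarrow> nat"

definition complexes_of :: "('c \<times> 'c) set \<Rightarrow> 'c set" where
  "complexes_of R = fst ` R \<union> snd ` R"

definition species_of :: "('s complex) set \<Rightarrow> 's set" where
  "species_of C = {s. \<exists>y\<in>C. y s \<noteq> 0}"

definition crn :: "'s set \<Rightarrow> ('s complex) set \<Rightarrow> ('s complex \<times> 's complex) set \<Rightarrow> bool" where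
  "crn S C R \<longleftrightarrow> finite S \<and> finite C \<and> R \<subseteq> C \<times> C
     \<and> (\<forall>y. (y, y) \<notin> R) \<and> C = complexes_of R
     \<and> (\<forall>y\<in>C. \<forall>s. y s \<noteq> 0 \<longrightarrow> s \<in> S) \<and> species_of C = S"

definition num_linkage_classes :: "('c \<times> 'c) set \<Rightarrow> nat" where
  "num_linkage_classes R = card (complexes_of R // ((R \<union> R\<inverse>)\<^sup>*))"

definition incidence_map :: "('c \<times> 'c) set \<Rightarrow> (('c \<times> 'c) \<Rightarrow> real) \<Rightarrow> ('c \<Rightarrow> real)" where
  "incidence_map R a = (\<lambda>c. \<Sum>r\<in>R. a r * ((if c = snd r then 1 else 0) - (if c = fst r then 1 else 0)))"

definition incidence_image :: "('c \<times> 'c) set \<Rightarrow> ('c \<Rightarrow> real) set" where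
  "incidence_image R = range (incidence_map R)"

definition decomposition :: "('c \<times> 'c) set \<Rightarrow> nat \<Rightarrow> (nat \<Rightarrow> ('c \<times> 'c) set) \<Rightarrow> bool" where
  "decomposition R k Rs \<longleftrightarrow> k \<ge> 2 \<and> (\<forall>i\<in>{1..k}. Rs i \<noteq> {})
     \<and> (\<forall>i\<in>{1..k}. \<forall>j\<in>{1..k}. i \<noteq> j \<longrightarrow> Rs i \<inter> Rs j = {})
     \<and> (\<Union>i\<in>{1..k}. Rs i) = R"

text \<open>Incidence independence: Im I_a is the (internal) direct sum of the Im I_i.\<close>
definition incidence_independent :: "('c \<times> 'c) set \<Rightarrow> nat \<Rightarrow> (nat \<Rightarrow> ('c \<times> 'c) set) \<Rightarrow> bool" where
  "incidence_independent R k Rs \<longleftrightarrow>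
     incidence_image R = {(\<lambda>c. \<Sum>i=1..k. v i c) | v. \<forall>i\<in>{1..k}. v i \<in> incidence_image (Rs i)}
     \<and> (\<forall>v. (\<forall>i\<in>{1..k}. v i \<in> incidence_image (Rs i)) \<and> (\<lambda>c. \<Sum>i=1..k. v i c) = (\<lambda>c. 0)
            \<longrightarrow> (\<forall>i\<in>{1..k}. v i = (\<lambda>c. 0)))"

definition common_complexes :: "nat \<Rightarrow> (nat \<Rightarrow> ('c \<times> 'c) set) \<Rightarrow> 'c set" where
  "common_complexes k Rs = {y. \<exists>i\<in>{1..k}. \<exists>j\<in>{1..k}. i \<noteq> j
       \<and> y \<in> complexes_of (Rs i) \<and> y \<in> complexes_of (Rs j)}"

end

theory Submission
  imports Defs "HOL-Library.Function_Algebras" "HOL-Library.Indicator_Function"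
begin

(* Im I_a is the span of the vectors omega_y' - omega_y of the reactions y -> y'.  For a graph on a
   finite vertex set V these edge vectors span a space of dimension |V| minus the number of
   connected components: an edge inside a component adds a vector already in the span, while an
   edge joining two components lies outside the span (summing coordinates over one component
   separates it) and merges the two components.  Finitely generated subspaces form a direct sum
   iff the dimension of their sum is the sum of their dimensions, so incidence independence says
   n - l = sum_i (n_i - l_i).  Since every complex outside C_D lies in exactly one C_i, also
   n - d = sum_i (n_i - h_i), and subtracting gives the claim. *)

definition direct_sum :: "'i set \<Rightarrow> ('i \<Rightarrow> 'a::comm_monoid_add set) \<Rightarrow> bool" where
  "direct_sum I V \<longleftrightarrow> (\<forall>v. (\<forall>i\<in>I. v i \<in> V i) \<and> sum v I = 0 \<longrightarrow> (\<forall>i\<in>I. v i = 0))"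

lemma direct_sumD:
  assumes "direct_sum I V" "\<And>i. i \<in> I \<Longrightarrow> v i \<in> V i" "sum v I = 0" "i \<in> I"
  shows "v i = 0"
  using assms unfolding direct_sum_def by blast

lemma card_UN_eq_sum_card_iff_disjoint:
  assumes "finite I" and fin: "\<And>i. i \<in> I \<Longrightarrow> finite (A i)"
  shows "card (\<Union>i\<in>I. A i) = (\<Sum>i\<in>I. card (A i)) \<longleftrightarrow> disjoint_family_on A I"
proof
  assume eq: "card (\<Union>i\<in>I. A i) = (\<Sum>i\<in>I. card (A i))"
  show "disjoint_family_on A I"
    unfolding disjoint_family_on_def
  proof (intro ballI impI)
    fix i j assume ij: "i \<in> I" "j \<in> I" "i \<noteq> j"
    let ?J = "I - {i, j}"
    have "(\<Union>i\<in>I. A i) = (A i \<union> A j) \<union> (\<Union>l\<in>?J. A l)"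
      using ij by blast
    then have "card (\<Union>i\<in>I. A i) \<le> card (A i \<union> A j) + card (\<Union>l\<in>?J. A l)"
      by (simp add: card_Un_le)
    also have "\<dots> \<le> card (A i \<union> A j) + (\<Sum>l\<in>?J. card (A l))"
      using card_UN_le[of ?J A] \<open>finite I\<close> by simp
    finally have "card (\<Union>i\<in>I. A i) \<le> card (A i \<union> A j) + (\<Sum>l\<in>?J. card (A l))" .
    moreover have "(\<Sum>l\<in>I. card (A l)) = card (A i) + (\<Sum>l\<in>I - {i}. card (A l))"
      using ij \<open>finite I\<close> by (intro sum.remove) auto
    moreover have "(\<Sum>l\<in>I - {i}. card (A l)) = card (A j) + (\<Sum>l\<in>?J. card (A l))"
      unfolding Diff_insert2[of I i "{j}"] using ij \<open>finite I\<close> by (intro sum.remove) auto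
    moreover have "card (A i) + card (A j) = card (A i \<union> A j) + card (A i \<inter> A j)"
      using card_Un_Int fin ij by blast
    ultimately have "card (A i \<inter> A j) = 0"
      using eq by linarith
    then show "A i \<inter> A j = {}"
      using fin ij by simp
  qed
qed (simp add: card_UN_disjoint' assms)

lemma card_UN_add_sum_card_Int_common:
  fixes A :: "'i \<Rightarrow> 'a set" and I :: "'i set"
  assumes "finite I" and fin: "\<And>i. i \<in> I \<Longrightarrow> finite (A i)"
  defines "D \<equiv> {x. \<exists>i\<in>I. \<exists>j\<in>I. i \<noteq> j \<and> x \<in> A i \<and> x \<in> A j}"
  shows "card (\<Union>i\<in>I. A i) + (\<Sum>i\<in>I. card (A i \<inter> D)) = (\<Sum>i\<in>I. card (A i)) + card D"
proof -
  have D_sub: "D \<subseteq> (\<Union>i\<in>I. A i)"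
    unfolding D_def by blast
  have "(\<Union>i\<in>I. A i) = D \<union> (\<Union>i\<in>I. A i - D)"
    using D_sub by blast
  then have "card (\<Union>i\<in>I. A i) = card (D \<union> (\<Union>i\<in>I. A i - D))"
    by (rule arg_cong)
  also have "\<dots> = card D + card (\<Union>i\<in>I. A i - D)"
  proof (rule card_Un_disjoint)
    show "finite D"
      using D_sub \<open>finite I\<close> fin by (meson finite_UN_I finite_subset)
  qed (use \<open>finite I\<close> fin in auto)
  also have "card (\<Union>i\<in>I. A i - D) = (\<Sum>i\<in>I. card (A i - D))"
  proof (rule card_UN_disjoint')
    show "disjoint_family_on (\<lambda>i. A i - D) I"
      unfolding disjoint_family_on_def D_def by blast
  qed (use \<open>finite I\<close> fin in auto)
  moreover have "(\<Sum>i\<in>I. card (A i)) = (\<Sum>i\<in>I. card (A i \<inter> D)) + (\<Sum>i\<in>I. card (A i - D))"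
    unfolding sum.distrib[symmetric] by (rule sum.cong[OF refl]) (rule card_Int_Diff[OF fin])
  ultimately show ?thesis
    by simp
qed

context vector_space begin

lemma span_UN:
  assumes "finite I"
  shows "span (\<Union>i\<in>I. G i) = {sum v I | v. \<forall>i\<in>I. v i \<in> span (G i)}"
  using assms
proof (induction I rule: finite_induct)
  case empty
  then show ?case by (auto simp: span_empty)
next
  case (insert j I)
  have "span (\<Union>i\<in>insert j I. G i) = {x + y | x y. x \<in> span (G j) \<and> y \<in> span (\<Union>i\<in>I. G i)}"
    by (simp add: span_Un)
  also have "\<dots> = {sum v (insert j I) | v. \<forall>i\<in>insert j I. v i \<in> span (G i)}"
  proof (intro equalityI subsetI)
    fix z assume "z \<in> {x + y | x y. x \<in> span (G j) \<and> y \<in> span (\<Union>i\<in>I. G i)}"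
    then obtain x y where "z = x + y" "x \<in> span (G j)" "y \<in> span (\<Union>i\<in>I. G i)"
      by blast
    moreover obtain w where "y = sum w I" "\<forall>i\<in>I. w i \<in> span (G i)"
      using \<open>y \<in> span (\<Union>i\<in>I. G i)\<close> insert.IH by blast
    moreover have "sum (w(j := x)) I = sum w I"
      using insert.hyps by (intro sum.cong) auto
    ultimately have "z = sum (w(j := x)) (insert j I) \<and> (\<forall>i\<in>insert j I. (w(j := x)) i \<in> span (G i))"
      using insert.hyps by auto
    then show "z \<in> {sum v (insert j I) | v. \<forall>i\<in>insert j I. v i \<in> span (G i)}"
      by blast
  next
    fix z assume "z \<in> {sum v (insert j I) | v. \<forall>i\<in>insert j I. v i \<in> span (G i)}"
    then obtain v where "z = sum v (insert j I)" "\<forall>i\<in>insert j I. v i \<in> span (G i)"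
      by blast
    moreover have "sum v (insert j I) = v j + sum v I"
      using insert.hyps by simp
    moreover have "sum v I \<in> span (\<Union>i\<in>I. G i)"
      using insert.IH \<open>\<forall>i\<in>insert j I. v i \<in> span (G i)\<close> by auto
    ultimately show "z \<in> {x + y | x y. x \<in> span (G j) \<and> y \<in> span (\<Union>i\<in>I. G i)}"
      by auto
  qed
  finally show ?case .
qed

lemma disjoint_family_if_direct_sum_span:
  assumes "finite I" and direct: "direct_sum I (\<lambda>i. span (B i))"
    and ind: "\<And>i. i \<in> I \<Longrightarrow> independent (B i)"
  shows "disjoint_family_on B I"
  unfolding disjoint_family_on_def
proof (intro ballI impI, rule ccontr)
  fix i j assume ij: "i \<in> I" "j \<in> I" "i \<noteq> j" "B i \<inter> B j \<noteq> {}"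
  then obtain b where b: "b \<in> B i" "b \<in> B j" by blast
  define v where "v = (\<lambda>l. (if l = i then b else 0) - (if l = j then b else 0))"
  have "\<forall>l\<in>I. v l \<in> span (B l)"
    using b by (auto simp: v_def span_base span_neg span_zero)
  moreover have "sum v I = 0"
    using ij \<open>finite I\<close> by (simp add: v_def sum_subtractf)
  ultimately have "v i = 0"
    using direct_sumD[OF direct _ _ ij(1)] by blast
  then show False
    using ind[OF ij(1)] b ij(3) dependent_zero by (simp add: v_def)
qed

lemma independent_UN_if_direct_sum_span:
  assumes "finite I" and fin: "\<And>i. i \<in> I \<Longrightarrow> finite (B i)"
    and direct: "direct_sum I (\<lambda>i. span (B i))" and ind: "\<And>i. i \<in> I \<Longrightarrow> independent (B i)"
  shows "independent (\<Union>i\<in>I. B i)"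
proof
  assume "dependent (\<Union>i\<in>I. B i)"
  moreover have "finite (\<Union>i\<in>I. B i)"
    using \<open>finite I\<close> fin by blast
  ultimately obtain u where u: "\<exists>w\<in>(\<Union>i\<in>I. B i). u w \<noteq> 0" "(\<Sum>w\<in>(\<Union>i\<in>I. B i). u w *s w) = 0"
    using dependent_finite by blast
  have "disjoint_family_on B I"
    using \<open>finite I\<close> direct ind by (rule disjoint_family_if_direct_sum_span)
  then have "(\<Sum>w\<in>(\<Union>i\<in>I. B i). u w *s w) = (\<Sum>i\<in>I. \<Sum>w\<in>B i. u w *s w)"
    using \<open>finite I\<close> fin by (intro sum.UNION_disjoint_family) auto
  with u(2) have sum_zero: "(\<Sum>i\<in>I. \<Sum>w\<in>B i. u w *s w) = 0"
    by simp
  have zero: "(\<Sum>w\<in>B i. u w *s w) = 0" if "i \<in> I" for i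
    by (rule direct_sumD[OF direct _ sum_zero that]) (blast intro: span_sum span_scale span_base)
  obtain i w where "i \<in> I" "w \<in> B i" "u w \<noteq> 0"
    using u(1) by blast
  then have "dependent (B i)"
    using zero[OF \<open>i \<in> I\<close>] dependent_finite[OF fin[OF \<open>i \<in> I\<close>]] by blast
  with ind \<open>i \<in> I\<close> show False
    by blast
qed

lemma direct_sum_span_if_independent_UN:
  assumes "finite I" and fin: "\<And>i. i \<in> I \<Longrightarrow> finite (B i)"
    and ind: "\<And>i. i \<in> I \<Longrightarrow> independent (B i)"
    and disj: "disjoint_family_on B I" and indU: "independent (\<Union>i\<in>I. B i)"
  shows "direct_sum I (\<lambda>i. span (B i))"
  unfolding direct_sum_def
proof (intro allI impI ballI)
  fix v j assume v: "(\<forall>i\<in>I. v i \<in> span (B i)) \<and> sum v I = 0" and j: "j \<in> I"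
  let ?rep = "\<lambda>i. representation (B i) (v i)"
  have rep_extend: "representation (\<Union>i\<in>I. B i) (v i) = ?rep i" if "i \<in> I" for i
    using representation_extend[OF indU, of "v i" "B i"] v that by blast
  have "v i \<in> span (\<Union>i\<in>I. B i)" if "i \<in> I" for i
    using v that span_mono[of "B i" "\<Union>i\<in>I. B i"] by blast
  then have "representation (\<Union>i\<in>I. B i) (sum v I) = (\<lambda>b. \<Sum>i\<in>I. ?rep i b)"
    using representation_sum[OF indU, of I v] rep_extend by simp
  then have rep_sum: "(\<Sum>i\<in>I. ?rep i b) = 0" for b
    using v by (simp add: representation_zero fun_eq_iff)
  have "?rep j b = 0" for b
  proof (cases "b \<in> B j")
    case True
    have "?rep i b = 0" if "i \<in> I" "i \<noteq> j" for i
      using disj True j that representation_ne_zero by (fastforce simp: disjoint_family_on_def)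
    then have "(\<Sum>i\<in>I. ?rep i b) = ?rep j b"
      using j \<open>finite I\<close> by (simp add: sum.remove sum.neutral)
    then show ?thesis
      using rep_sum by simp
  qed (use representation_ne_zero in blast)
  then show "v j = 0"
    using sum_representation_eq[of "B j" "v j" "B j"] fin ind v j by simp
qed

lemma direct_sum_span_iff_independent_UN:
  assumes "finite I" and "\<And>i. i \<in> I \<Longrightarrow> finite (B i)" and "\<And>i. i \<in> I \<Longrightarrow> independent (B i)"
  shows "direct_sum I (\<lambda>i. span (B i)) \<longleftrightarrow> disjoint_family_on B I \<and> independent (\<Union>i\<in>I. B i)"
  using assms disjoint_family_if_direct_sum_span independent_UN_if_direct_sum_span
    direct_sum_span_if_independent_UN
  by metis

lemma independent_iff_dim_eq_card:
  assumes "finite U"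
  shows "independent U \<longleftrightarrow> dim U = card U"
proof
  assume "dim U = card U"
  obtain U' where U': "U' \<subseteq> U" "independent U'" "U \<subseteq> span U'"
    using maximal_independent_subset by blast
  have "card U' = dim U"
    by (rule basis_card_eq_dim[OF U'(1) U'(3) U'(2)])
  then have "U' = U"
    using card_subset_eq[OF assms U'(1)] \<open>dim U = card U\<close> by simp
  with U'(2) show "independent U" by simp
qed (rule dim_eq_card_independent)

lemma dim_insert_not_in_span:
  assumes "finite S" "x \<notin> span S"
  shows "dim (insert x S) = Suc (dim S)"
proof -
  obtain B where B: "B \<subseteq> S" "independent B" "S \<subseteq> span B" "card B = dim S"
    using basis_exists by blast
  have "B \<subseteq> span (insert x S)"
    using B(1) span_superset[of "insert x S"] by blast
  moreover have "S \<subseteq> span (insert x B)"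
    using B(3) span_mono[of B "insert x B"] by blast
  ultimately have "span (insert x B) = span (insert x S)"
    unfolding span_eq using span_superset by blast
  moreover have "x \<notin> span B"
    using assms(2) span_mono[OF B(1)] by blast
  then have "independent (insert x B)"
    using B(2) by (rule independent_insertI)
  ultimately have "dim (insert x S) = card (insert x B)"
    by (rule dim_eq_card)
  moreover have "finite B" "x \<notin> B"
    using B(1) assms finite_subset span_superset by blast+
  ultimately show ?thesis
    using B(4) by simp
qed

(* For bases B i of the G i: dim (\<Union>i. B i) \<le> card (\<Union>i. B i) \<le> (\<Sum>i. card (B i)), with equality
   in the first step iff the union is independent and in the second iff the B i are disjoint. *)
lemma direct_sum_span_iff_dim:
  assumes "finite I" and fin: "\<And>i. i \<in> I \<Longrightarrow> finite (G i)"
  shows "direct_sum I (\<lambda>i. span (G i)) \<longleftrightarrow> dim (\<Union>i\<in>I. G i) = (\<Sum>i\<in>I. dim (G i))"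
proof -
  have "\<exists>B. B \<subseteq> G i \<and> independent B \<and> G i \<subseteq> span B \<and> card B = dim (G i)" for i
    by (rule basis_exists[of "G i"]) blast
  then obtain B where B: "\<And>i. B i \<subseteq> G i \<and> independent (B i) \<and> G i \<subseteq> span (B i) \<and> card (B i) = dim (G i)"
    by metis
  define U where "U = (\<Union>i\<in>I. B i)"
  have finB: "finite (B i)" if "i \<in> I" for i
    using B[of i] fin[OF that] finite_subset by blast
  have finU: "finite U"
    unfolding U_def using \<open>finite I\<close> finB by blast
  have span_B: "span (B i) = span (G i)" if "i \<in> I" for i
    unfolding span_eq using B[of i] span_superset by blast
  have "span U = span (\<Union>i\<in>I. G i)"
    unfolding U_def span_UN[OF \<open>finite I\<close>] using span_B by auto
  then have dim_U: "dim (\<Union>i\<in>I. G i) = dim U"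
    by (metis dim_span)
  have "direct_sum I (\<lambda>i. span (G i)) \<longleftrightarrow> direct_sum I (\<lambda>i. span (B i))"
    using span_B by (simp add: direct_sum_def)
  also have "\<dots> \<longleftrightarrow> disjoint_family_on B I \<and> independent U"
    unfolding U_def using direct_sum_span_iff_independent_UN[OF \<open>finite I\<close>, of B] finB B by blast
  also have "\<dots> \<longleftrightarrow> card U = (\<Sum>i\<in>I. card (B i)) \<and> dim U = card U"
    unfolding U_def
    using card_UN_eq_sum_card_iff_disjoint[OF \<open>finite I\<close>, of B] finB
      independent_iff_dim_eq_card[OF finU[unfolded U_def]]
    by metis
  also have "\<dots> \<longleftrightarrow> dim U = (\<Sum>i\<in>I. card (B i))"
    using dim_le_card[OF span_superset finU] card_UN_le[OF \<open>finite I\<close>, of B]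
    unfolding U_def by linarith
  finally show ?thesis
    using dim_U B by simp
qed

end

lemma sum_fun_apply: "sum f A x = (\<Sum>a\<in>A. f a x)"
  by (induction A rule: infinite_finite_induct) auto

(* 'c \<Rightarrow> real is not an instance of real_vector, so the vector space structure on it is
   obtained by interpreting the locale with pointwise scaling. *)
definition fun_scale :: "real \<Rightarrow> ('c \<Rightarrow> real) \<Rightarrow> 'c \<Rightarrow> real" where
  "fun_scale r f = (\<lambda>x. r * f x)"

interpretation fun_vs: vector_space fun_scale
  by unfold_locales (auto simp: fun_scale_def algebra_simps fun_eq_iff)

definition edge_vector :: "'c \<times> 'c \<Rightarrow> 'c \<Rightarrow> real" where
  "edge_vector e = indicator {snd e} - indicator {fst e}"

lemma edge_vector_trans: "edge_vector (x, z) = edge_vector (x, y) + edge_vector (y, z)"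
  by (simp add: edge_vector_def)

lemma edge_vector_swap: "edge_vector (y, x) = - edge_vector (x, y)"
  by (simp add: edge_vector_def)

lemma incidence_map_eq_sum: "incidence_map R a = (\<Sum>r\<in>R. fun_scale (a r) (edge_vector r))"
  unfolding incidence_map_def
  by (rule ext) (simp add: fun_scale_def edge_vector_def sum_fun_apply indicator_def of_bool_def)

lemma incidence_image_eq_span:
  assumes "finite R"
  shows "incidence_image R = fun_vs.span (edge_vector ` R)"
proof
  show "incidence_image R \<subseteq> fun_vs.span (edge_vector ` R)"
    unfolding incidence_image_def incidence_map_eq_sum
    by (blast intro: fun_vs.span_sum fun_vs.span_scale fun_vs.span_base)
next
  have "incidence_map R (\<lambda>r'. if r' = r then 1 else 0) = edge_vector r" if "r \<in> R" for r
  proof -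
    have "incidence_map R (\<lambda>r'. if r' = r then 1 else 0)
        = (\<Sum>r'\<in>R. if r' = r then edge_vector r' else 0)"
      unfolding incidence_map_eq_sum by (intro sum.cong) auto
    then show ?thesis
      using assms that by simp
  qed
  then have "edge_vector ` R \<subseteq> incidence_image R"
    unfolding incidence_image_def by (metis image_subsetI rangeI)
  moreover have "fun_vs.subspace (incidence_image R)"
  proof (rule fun_vs.subspaceI)
    have "incidence_map R (\<lambda>_. 0) = 0"
      by (simp add: incidence_map_def fun_eq_iff)
    then show "0 \<in> incidence_image R"
      unfolding incidence_image_def by (metis rangeI)
    have add: "incidence_map R a + incidence_map R b = incidence_map R (\<lambda>r. a r + b r)" for a b
      by (simp add: incidence_map_def fun_eq_iff sum.distrib[symmetric] distrib_right)
    have scale: "fun_scale c (incidence_map R a) = incidence_map R (\<lambda>r. c * a r)" for c a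
      by (simp add: incidence_map_def fun_scale_def fun_eq_iff sum_distrib_left mult.assoc)
    fix c x y assume "x \<in> incidence_image R" "y \<in> incidence_image R"
    then obtain a b where "x = incidence_map R a" "y = incidence_map R b"
      unfolding incidence_image_def by blast
    then show "x + y \<in> incidence_image R" "fun_scale c x \<in> incidence_image R"
      unfolding incidence_image_def by (simp_all only: add scale rangeI)
  qed
  ultimately show "fun_vs.span (edge_vector ` R) \<subseteq> incidence_image R"
    by (rule fun_vs.span_minimal)
qed

abbreviation linkage :: "('c \<times> 'c) set \<Rightarrow> ('c \<times> 'c) set" where
  "linkage E \<equiv> (E \<union> E\<inverse>)\<^sup>*"

lemma linkage_sym: "(x, y) \<in> linkage E \<Longrightarrow> (y, x) \<in> linkage E"
  by (rule symD[OF sym_rtrancl[OF sym_Un_converse]])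

lemma equiv_linkage: "equiv UNIV (linkage E)"
  by (rule equivI) (simp_all add: refl_rtrancl sym_rtrancl[OF sym_Un_converse] trans_rtrancl)

lemma card_quotient_linkage_empty: "card (V // linkage {}) = card V"
proof -
  have "V // linkage {} = (\<lambda>x. {x}) ` V"
    by (auto simp: quotient_def)
  then show ?thesis
    by (simp add: card_image)
qed

lemma linkage_insert:
  "linkage (insert (a, b) E) = linkage E \<union> (linkage E `` {a, b}) \<times> (linkage E `` {a, b})"
  (is "_ = _ \<union> ?A \<times> ?A")
proof -
  let ?S = "insert (b, a) (E \<union> E\<inverse>)"
  have S: "?S\<^sup>* = linkage E \<union> {(x, y). (x, b) \<in> linkage E \<and> (a, y) \<in> linkage E}"
    by (rule rtrancl_insert)
  have to_a: "(x, a) \<in> ?S\<^sup>* \<longleftrightarrow> x \<in> ?A" for x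
    unfolding S by (auto intro: linkage_sym)
  have from_b: "(b, y) \<in> ?S\<^sup>* \<longleftrightarrow> y \<in> ?A" for y
    unfolding S by (auto intro: linkage_sym)
  have "insert (a, b) E \<union> (insert (a, b) E)\<inverse> = insert (a, b) ?S"
    by blast
  then have "linkage (insert (a, b) E) = ?S\<^sup>* \<union> ?A \<times> ?A"
    using to_a from_b by (simp add: rtrancl_insert)
  also have "\<dots> = linkage E \<union> ?A \<times> ?A"
    unfolding S by (auto intro: linkage_sym)
  finally show ?thesis .
qed

lemma linkage_insert_linked:
  assumes "(a, b) \<in> linkage E"
  shows "linkage (insert (a, b) E) = linkage E"
proof -
  have "linkage E `` {a, b} = linkage E `` {a}"
    using assms by (auto intro: rtrancl_trans)
  then have "linkage E `` {a, b} \<times> linkage E `` {a, b} \<subseteq> linkage E"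
    by (auto intro: rtrancl_trans linkage_sym)
  then show ?thesis
    unfolding linkage_insert by blast
qed

lemma linkage_Image_insert:
  assumes "x \<in> linkage E `` {a, b}"
  shows "linkage (insert (a, b) E) `` {x} = linkage E `` {a, b}"
proof -
  have "linkage E `` {x} \<subseteq> linkage E `` {a, b}"
    using assms by (auto intro: rtrancl_trans)
  then show ?thesis
    using assms unfolding linkage_insert by blast
qed

lemma card_quotient_linkage_insert:
  assumes "finite V" "a \<in> V" "b \<in> V" "(a, b) \<notin> linkage E"
  shows "card (V // linkage E) = Suc (card (V // linkage (insert (a, b) E)))"
proof -
  let ?cls = "\<lambda>x. linkage E `` {x}" and ?A = "linkage E `` {a, b}"
  have cls_eq_iff: "?cls x = ?cls y \<longleftrightarrow> (x, y) \<in> linkage E" for x y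
    using eq_equiv_class_iff[OF equiv_linkage UNIV_I UNIV_I] .
  have in_A: "x \<in> ?A \<longleftrightarrow> ?cls a = ?cls x \<or> ?cls b = ?cls x" for x
    unfolding cls_eq_iff by blast
  have cls_insert: "linkage (insert (a, b) E) `` {x} = (if x \<in> ?A then ?A else ?cls x)" for x
    using linkage_Image_insert[of x E a b] unfolding linkage_insert by auto
  have "V // linkage (insert (a, b) E) = (\<lambda>x. if x \<in> ?A then ?A else ?cls x) ` V"
    unfolding quotient_def cls_insert by (rule UNION_singleton_eq_range)
  also have "\<dots> = insert ?A (V // linkage E - {?cls a, ?cls b})"
    unfolding quotient_def using assms(2) in_A by (auto simp del: Image_singleton_iff)
  finally have quotient_insert:
    "V // linkage (insert (a, b) E) = insert ?A (V // linkage E - {?cls a, ?cls b})" .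
  have "?A \<notin> V // linkage E"
  proof
    assume "?A \<in> V // linkage E"
    then obtain x where "?A = ?cls x"
      unfolding quotient_def by blast
    then have "a \<in> ?cls x" "b \<in> ?cls x"
      by auto
    then have "?cls x = ?cls a" "?cls x = ?cls b"
      using cls_eq_iff by simp_all
    then have "?cls a = ?cls b"
      by simp
    then show False
      using assms(4) cls_eq_iff by blast
  qed
  moreover have classes: "{?cls a, ?cls b} \<subseteq> V // linkage E" "card {?cls a, ?cls b} = 2"
    using assms cls_eq_iff by (auto intro: quotientI)
  moreover have "finite (V // linkage E)"
    using assms(1) by (simp add: quotient_def)
  ultimately show ?thesis
    unfolding quotient_insert using card_mono[OF _ classes(1)] by (simp add: card_Diff_subset)
qed

lemma linkage_Image_subset:
  assumes "E \<subseteq> V \<times> V" "a \<in> V"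
  shows "linkage E `` {a} \<subseteq> V"
proof
  fix y assume "y \<in> linkage E `` {a}"
  then have "(a, y) \<in> linkage E" by simp
  then show "y \<in> V"
    by (induction rule: rtrancl_induct) (use assms in auto)
qed

lemma edge_vector_in_span_if_linked:
  assumes "(x, y) \<in> linkage E"
  shows "edge_vector (x, y) \<in> fun_vs.span (edge_vector ` E)"
  using assms
proof (induction rule: rtrancl_induct)
  case base
  have "edge_vector (x, x) = 0"
    by (simp add: edge_vector_def)
  then show ?case
    by (simp only: fun_vs.span_zero)
next
  case (step y z)
  have "edge_vector (y, z) \<in> fun_vs.span (edge_vector ` E)"
  proof (cases "(y, z) \<in> E")
    case True
    then show ?thesis
      by (intro fun_vs.span_base imageI)
  next
    case False
    then have "(z, y) \<in> E"
      using step.hyps(2) by blast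
    then have "edge_vector (z, y) \<in> fun_vs.span (edge_vector ` E)"
      by (intro fun_vs.span_base imageI)
    then show ?thesis
      unfolding edge_vector_swap[of y z] by (rule fun_vs.span_neg)
  qed
  then show ?case
    unfolding edge_vector_trans[of x z y] by (rule fun_vs.span_add[OF step.IH])
qed

(* The coordinate sum over the linkage class of a vanishes on every edge vector of E,
   but not on edge_vector (a, b). *)
lemma edge_vector_notin_span_if_unlinked:
  assumes "finite (linkage E `` {a})" "(a, b) \<notin> linkage E"
  shows "edge_vector (a, b) \<notin> fun_vs.span (edge_vector ` E)"
proof
  let ?K = "linkage E `` {a}"
  have sum_K: "(\<Sum>x\<in>?K. edge_vector (p, q) x) = indicator ?K q - indicator ?K p" for p q
    using assms(1) by (simp add: edge_vector_def sum_subtractf indicator_def of_bool_def sum.delta')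
  have "edge_vector ` E \<subseteq> {f. (\<Sum>x\<in>?K. f x) = 0}"
  proof clarify
    fix p q assume "(p, q) \<in> E"
    then have "(p, q) \<in> linkage E" "(q, p) \<in> linkage E"
      by auto
    then have "p \<in> ?K \<longleftrightarrow> q \<in> ?K"
      by (meson Image_singleton_iff rtrancl_trans)
    then show "(\<Sum>x\<in>?K. edge_vector (p, q) x) = 0"
      by (simp add: sum_K indicator_def)
  qed
  moreover have "fun_vs.subspace {f. (\<Sum>x\<in>?K. f x) = 0}"
    by (simp add: fun_vs.subspace_def fun_scale_def sum.distrib sum_distrib_left[symmetric])
  ultimately have "fun_vs.span (edge_vector ` E) \<subseteq> {f. (\<Sum>x\<in>?K. f x) = 0}"
    by (rule fun_vs.span_minimal)
  moreover assume "edge_vector (a, b) \<in> fun_vs.span (edge_vector ` E)"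
  ultimately have "(\<Sum>x\<in>?K. edge_vector (a, b) x) = 0"
    by blast
  then show False
    using assms(2) by (simp add: sum_K indicator_def)
qed

lemma dim_edge_vectors_add_card_quotient:
  assumes "finite V" "E \<subseteq> V \<times> V"
  shows "fun_vs.dim (edge_vector ` E) + card (V // linkage E) = card V"
proof -
  have "finite E"
    using assms finite_subset by blast
  then show ?thesis
    using assms(2)
  proof (induction E rule: finite_induct)
    case empty
    have "fun_vs.dim ({} :: ('c \<Rightarrow> real) set) = 0"
      using fun_vs.dim_eq_card_independent[OF fun_vs.independent_empty] by simp
    then show ?case
      using card_quotient_linkage_empty[of V] by simp
  next
    case (insert e F)
    obtain a b where e: "e = (a, b)"
      by fastforce
    have F: "F \<subseteq> V \<times> V" and ab: "a \<in> V" "b \<in> V"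
      using insert.prems e by auto
    show ?case
    proof (cases "(a, b) \<in> linkage F")
      case True
      then have "edge_vector e \<in> fun_vs.span (edge_vector ` F)"
        unfolding e by (rule edge_vector_in_span_if_linked)
      then have "fun_vs.dim (edge_vector ` insert e F) = fun_vs.dim (edge_vector ` F)"
        by (metis image_insert fun_vs.dim_span fun_vs.span_redundant)
      moreover have "linkage (insert e F) = linkage F"
        unfolding e using True by (rule linkage_insert_linked)
      ultimately show ?thesis
        using insert.IH[OF F] by simp
    next
      case False
      have "finite (linkage F `` {a})"
        using linkage_Image_subset[OF F ab(1)] assms(1) finite_subset by blast
      then have "edge_vector e \<notin> fun_vs.span (edge_vector ` F)"
        unfolding e using False by (rule edge_vector_notin_span_if_unlinked)
      then have "fun_vs.dim (edge_vector ` insert e F) = Suc (fun_vs.dim (edge_vector ` F))"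
        using fun_vs.dim_insert_not_in_span[OF finite_imageI[OF insert.hyps(1)]] by simp
      moreover have "card (V // linkage F) = Suc (card (V // linkage (insert e F)))"
        unfolding e using assms(1) ab False by (rule card_quotient_linkage_insert)
      ultimately show ?thesis
        using insert.IH[OF F] by simp
    qed
  qed
qed

lemma dim_edge_vectors_add_num_linkage_classes:
  assumes "finite R"
  shows "fun_vs.dim (edge_vector ` R) + num_linkage_classes R = card (complexes_of R)"
proof -
  have "finite (complexes_of R)"
    using assms by (simp add: complexes_of_def)
  moreover have "R \<subseteq> complexes_of R \<times> complexes_of R"
    by (force simp: complexes_of_def)
  ultimately show ?thesis
    unfolding num_linkage_classes_def by (rule dim_edge_vectors_add_card_quotient)
qed

lemma finite_reactions_crn: "crn S C R \<Longrightarrow> finite R"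
  unfolding crn_def by (meson finite_SigmaI finite_subset)

lemma decomposition_UN: "decomposition R k Rs \<Longrightarrow> R = (\<Union>i\<in>{1..k}. Rs i)"
  by (simp add: decomposition_def)

lemma finite_decomposition_part:
  assumes "finite R" "decomposition R k Rs" "i \<in> {1..k}"
  shows "finite (Rs i)"
proof (rule finite_subset[OF _ assms(1)])
  show "Rs i \<subseteq> R"
    using decomposition_UN[OF assms(2)] assms(3) by blast
qed

lemma complexes_of_UN: "complexes_of (\<Union>i\<in>I. R i) = (\<Union>i\<in>I. complexes_of (R i))"
  by (auto simp: complexes_of_def)

lemma card_complexes_decomposition:
  assumes "finite R" "decomposition R k Rs"
  shows "card (complexes_of R) + (\<Sum>i=1..k. card (complexes_of (Rs i) \<inter> common_complexes k Rs))
    = (\<Sum>i=1..k. card (complexes_of (Rs i))) + card (common_complexes k Rs)"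
  unfolding decomposition_UN[OF assms(2)] complexes_of_UN common_complexes_def
  using finite_decomposition_part[OF assms]
  by (intro card_UN_add_sum_card_Int_common) (auto simp: complexes_of_def)

lemma incidence_independent_iff_direct_sum:
  assumes "finite R" "decomposition R k Rs"
  shows "incidence_independent R k Rs \<longleftrightarrow> direct_sum {1..k} (\<lambda>i. fun_vs.span (edge_vector ` Rs i))"
proof -
  have image_Rs: "incidence_image (Rs i) = fun_vs.span (edge_vector ` Rs i)" if "i \<in> {1..k}" for i
    using finite_decomposition_part[OF assms that] by (rule incidence_image_eq_span)
  have "incidence_image R = fun_vs.span (\<Union>i\<in>{1..k}. edge_vector ` Rs i)"
    using incidence_image_eq_span[OF assms(1)] decomposition_UN[OF assms(2)] by (simp add: image_UN)
  also have "\<dots> = {sum v {1..k} | v. \<forall>i\<in>{1..k}. v i \<in> incidence_image (Rs i)}"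
    using image_Rs by (simp add: fun_vs.span_UN)
  finally show ?thesis
    unfolding incidence_independent_def direct_sum_def
    using image_Rs by (simp add: sum_fun_apply[symmetric] zero_fun_def[symmetric])
qed

lemma incidence_independent_iff_dim_eq_sum:
  assumes "finite R" "decomposition R k Rs"
  shows "incidence_independent R k Rs \<longleftrightarrow>
    fun_vs.dim (edge_vector ` R) = (\<Sum>i=1..k. fun_vs.dim (edge_vector ` Rs i))"
proof -
  have "incidence_independent R k Rs \<longleftrightarrow> direct_sum {1..k} (\<lambda>i. fun_vs.span (edge_vector ` Rs i))"
    using assms by (rule incidence_independent_iff_direct_sum)
  also have "\<dots> \<longleftrightarrow>
      fun_vs.dim (\<Union>i\<in>{1..k}. edge_vector ` Rs i) = (\<Sum>i=1..k. fun_vs.dim (edge_vector ` Rs i))"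
    using finite_decomposition_part[OF assms] by (intro fun_vs.direct_sum_span_iff_dim) auto
  also have "(\<Union>i\<in>{1..k}. edge_vector ` Rs i) = edge_vector ` R"
    unfolding decomposition_UN[OF assms(2)] image_UN ..
  finally show ?thesis .
qed

theorem proposition5:
  fixes S :: "'s set" and C :: "'s complex set" and R :: "('s complex \<times> 's complex) set"
    and k :: nat and Rs :: "nat \<Rightarrow> ('s complex \<times> 's complex) set"
  assumes "crn S C R" and "decomposition R k Rs"
  shows "incidence_independent R k Rs \<longleftrightarrow>
    (\<Sum>i=1..k. int (num_linkage_classes (Rs i))) - int (num_linkage_classes R)
      = (\<Sum>i=1..k. int (card (complexes_of (Rs i) \<inter> common_complexes k Rs)))
        - int (card (common_complexes k Rs))"
proof -
  have "finite R"
    using assms(1) by (rule finite_reactions_crn)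
  have "incidence_independent R k Rs \<longleftrightarrow>
      fun_vs.dim (edge_vector ` R) = (\<Sum>i=1..k. fun_vs.dim (edge_vector ` Rs i))"
    using \<open>finite R\<close> assms(2) by (rule incidence_independent_iff_dim_eq_sum)
  moreover have "fun_vs.dim (edge_vector ` R) + num_linkage_classes R = card (complexes_of R)"
    using \<open>finite R\<close> by (rule dim_edge_vectors_add_num_linkage_classes)
  moreover have "(\<Sum>i=1..k. fun_vs.dim (edge_vector ` Rs i)) + (\<Sum>i=1..k. num_linkage_classes (Rs i))
      = (\<Sum>i=1..k. card (complexes_of (Rs i)))"
    unfolding sum.distrib[symmetric] using finite_decomposition_part[OF \<open>finite R\<close> assms(2)]
    by (intro sum.cong refl dim_edge_vectors_add_num_linkage_classes)
  moreover have "card (complexes_of R) + (\<Sum>i=1..k. card (complexes_of (Rs i) \<inter> common_complexes k Rs))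
      = (\<Sum>i=1..k. card (complexes_of (Rs i))) + card (common_complexes k Rs)"
    using \<open>finite R\<close> assms(2) by (rule card_complexes_decomposition)
  ultimately show ?thesis
    unfolding of_nat_sum[symmetric] by linarith
qed

end
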